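(* Let $k\ge 3$ and let $w$ be a word over $\{a,b\}$. For any occurrence of $u=ba^{k-1}$ in $w$, local position $0$ is forbidden in that occurrence if and only if local position $k-1$ is forbidden in the same occurrence. For any occurrence of $v=b^{k-1}a$ in $w$, local position $0$ is forbidden in that occurrence.
   Context: $\Sigma=\{a,b\}$. For $k\ge 3$, $S_k=\left(\Sigma^k\setminus\{ba^{k-1},b^{k-1}a\}\right)\cup\left(\Sigma^{k-1}\setminus\{a^{k-1},b^{k-1}\}\right)$, $u=ba^{k-1}$, $v=b^{k-1}a$. $\mathit{Pref}(S^* )$ denotes the set of all prefixes of words in $S^*$. For $w=w_1\cdots w_n$, $w[i..j]=w_i\cdots w_j$ (empty if $i>j$). A position $j$, $0\le j\le n-1$, is forbidden in $w$ if $w[j+1..n]\notin\mathit{Pref}(S_k^* )$. An occurrence of $p\in\{u,v\}$ in $w$ is an index $s$ with $w[s+1..s+k]=p$; its local positions are $0,\dots,k-1$, local position $i$ being the position $s+i$ of $w$, and local position $i$ is forbidden in the occurrence if $s+i$ is forbidden in $w$. *)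

theory Defs
  imports Main
begin

datatype letter = a | b

definition Sk :: "nat \<Rightarrow> letter list set" where
  "Sk k = ({w. length w = k} - {b # replicate (k - 1) a, replicate (k - 1) b @ [a]})
        \<union> ({w. length w = k - 1} - {replicate (k - 1) a, replicate (k - 1) b})"

definition u_word :: "nat \<Rightarrow> letter list" where
  "u_word k = b # replicate (k - 1) a"

definition v_word :: "nat \<Rightarrow> letter list" where
  "v_word k = replicate (k - 1) b @ [a]"

definition lang_star :: "'x list set \<Rightarrow> 'x list set" where
  "lang_star S = {concat ws | ws. set ws \<subseteq> S}"

definition Pref :: "'x list set \<Rightarrow> 'x list set" where
  "Pref L = {p. \<exists>s. p @ s \<in> L}"

text \<open>Position j (0 \<le> j \<le> n-1) is forbidden in w iff w[j+1..n] = drop j w is not in Pref(S_k^*).\<close>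
definition forbidden :: "nat \<Rightarrow> letter list \<Rightarrow> nat \<Rightarrow> bool" where
  "forbidden k w j \<longleftrightarrow> j < length w \<and> drop j w \<notin> Pref (lang_star (Sk k))"

text \<open>An occurrence of p in w is an index s with w[s+1..s+|p|] = p.\<close>
definition occurrence :: "letter list \<Rightarrow> letter list \<Rightarrow> nat \<Rightarrow> bool" where
  "occurrence p w s \<longleftrightarrow> s + length p \<le> length w \<and> take (length p) (drop s w) = p"

end

theory Submission
  imports Defs
begin

text \<open>
  Every word of S_k has length k or k-1,
  so a word x = p @ r with |p| = k lies in Pref(S_k^*) exactly when either p itself
  is a factor of S_k and r is again in Pref(S_k^*), or the first factor is the
  (k-1)-prefix of p and the remainder (last letter of p) @ r is in Pref(S_k^*)
  (lemma Pref_Sk_first_factor).  For an occurrence of u = ba^(k-1) the first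
  alternative is impossible (u is excluded from S_k) while ba^(k-2) is in S_k, so
  the suffixes at local positions 0 and k-1 are simultaneously in Pref(S_k^*) or
  not.  For an occurrence of v = b^(k-1)a both alternatives are impossible, because
  v and b^(k-1) are both excluded from S_k.
\<close>

lemma Pref_star_prepend:
  assumes "p \<in> S" and "y \<in> Pref (lang_star S)"
  shows "p @ y \<in> Pref (lang_star S)"
proof -
  from assms(2) obtain t ws where "y @ t = concat ws" and "set ws \<subseteq> S"
    by (auto simp: Pref_def lang_star_def)
  then have "(p @ y) @ t = concat (p # ws)" and "set (p # ws) \<subseteq> S"
    using assms(1) by auto
  then show ?thesis
    unfolding Pref_def lang_star_def by blast
qed

lemma Pref_star_first_factor:
  assumes "x \<in> Pref (lang_star S)" and "x \<noteq> []"
    and short: "\<And>w. w \<in> S \<Longrightarrow> length w \<le> length x"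
  obtains w0 r where "w0 \<in> S" and "x = w0 @ r" and "r \<in> Pref (lang_star S)"
proof -
  from assms(1) obtain t ws where eq: "x @ t = concat ws" and ws: "set ws \<subseteq> S"
    by (auto simp: Pref_def lang_star_def)
  from eq \<open>x \<noteq> []\<close> obtain w0 ws' where ws_def: "ws = w0 # ws'"
    by (cases ws) auto
  have w0: "w0 \<in> S" and ws': "set ws' \<subseteq> S"
    using ws ws_def by auto
  have "x @ t = w0 @ concat ws'"
    using eq ws_def by simp
  with short[OF w0] have "take (length w0) x = w0" and rest: "drop (length w0) x @ t = concat ws'"
    by (auto simp: append_eq_append_conv_if split: if_splits)
  then have "x = w0 @ drop (length w0) x"
    by (metis append_take_drop_id)
  moreover have "drop (length w0) x \<in> Pref (lang_star S)"
    using rest ws' unfolding Pref_def lang_star_def by blast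
  ultimately show ?thesis
    using w0 that by blast
qed

lemma Sk_length: "w \<in> Sk k \<Longrightarrow> length w = k \<or> length w = k - 1"
  by (auto simp: Sk_def)

lemma Pref_Sk_first_factor:
  assumes "0 < k" and "length p = k"
  shows "p @ r \<in> Pref (lang_star (Sk k)) \<longleftrightarrow>
           (p \<in> Sk k \<and> r \<in> Pref (lang_star (Sk k)))
         \<or> (take (k - 1) p \<in> Sk k \<and> drop (k - 1) p @ r \<in> Pref (lang_star (Sk k)))"
    (is "?x \<in> ?P \<longleftrightarrow> ?whole \<or> ?short")
proof
  assume "?x \<in> ?P"
  moreover have "?x \<noteq> []"
    using assms by auto
  moreover have "length w \<le> length ?x" if "w \<in> Sk k" for w
    using Sk_length[OF that] assms by auto
  ultimately obtain w0 r' where w0: "w0 \<in> Sk k" and x: "?x = w0 @ r'" and r': "r' \<in> ?P"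
    by (rule Pref_star_first_factor)
  show "?whole \<or> ?short"
  proof (cases "length w0 = k")
    case True
    with x assms(2) have "w0 = p" and "r' = r"
      by (auto simp: append_eq_append_conv)
    with w0 r' show ?thesis by simp
  next
    case False
    with Sk_length[OF w0] have "length w0 = k - 1" by simp
    with x have "w0 = take (k - 1) p" and "r' = drop (k - 1) p @ r"
      using assms by (auto simp: append_eq_append_conv_if split: if_splits)
    with w0 r' show ?thesis by simp
  qed
next
  assume "?whole \<or> ?short"
  then show "?x \<in> ?P"
  proof
    assume "?whole"
    then show ?thesis by (simp add: Pref_star_prepend)
  next
    assume "?short"
    then have "take (k - 1) p @ (drop (k - 1) p @ r) \<in> ?P"
      by (simp add: Pref_star_prepend)
    then show ?thesis
      by (metis append_assoc append_take_drop_id)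
  qed
qed

lemma u_word_not_in_Sk: "u_word k \<notin> Sk k"
  by (cases k) (auto simp: Sk_def u_word_def)

lemma u_word_short_prefix_in_Sk:
  assumes "k \<ge> 3"
  shows "take (k - 1) (u_word k) \<in> Sk k"
proof -
  obtain m where k: "k = Suc (Suc (Suc m))"
    using assms by (metis Suc_le_D numeral_3_eq_3 Suc_le_mono)
  then show ?thesis
    by (auto simp: Sk_def u_word_def)
qed

lemma v_word_not_in_Sk: "v_word k \<notin> Sk k"
  by (cases k) (auto simp: Sk_def v_word_def)

lemma v_word_short_prefix_not_in_Sk: "0 < k \<Longrightarrow> take (k - 1) (v_word k) \<notin> Sk k"
  by (auto simp: Sk_def v_word_def)

lemma forbidden_iff:
  "j < length w \<Longrightarrow> forbidden k w j \<longleftrightarrow> drop j w \<notin> Pref (lang_star (Sk k))"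
  by (simp add: forbidden_def)

lemma occurrence_suffix:
  "occurrence p w s \<Longrightarrow> drop s w = p @ drop (s + length p) w"
  unfolding occurrence_def by (metis append_take_drop_id drop_drop add.commute)

lemma occurrence_length:
  "occurrence p w s \<Longrightarrow> s + length p \<le> length w"
  by (simp add: occurrence_def)

theorem lemma2:
  fixes k :: nat and w :: "letter list"
  assumes "k \<ge> 3"
  shows "(\<forall>s. occurrence (u_word k) w s \<longrightarrow>
            (forbidden k w (s + 0) \<longleftrightarrow> forbidden k w (s + (k - 1))))
       \<and> (\<forall>s. occurrence (v_word k) w s \<longrightarrow> forbidden k w (s + 0))"
proof (intro conjI allI impI)
  let ?P = "Pref (lang_star (Sk k))"
  fix s assume occ: "occurrence (u_word k) w s"
  have len: "length (u_word k) = k"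
    using assms by (simp add: u_word_def)
  define r where "r = drop (s + k) w"
  have at0: "drop s w = u_word k @ r"
    using occurrence_suffix[OF occ] len by (simp add: r_def)
  have "drop (s + (k - 1)) w = drop (k - 1) (drop s w)"
    by (simp add: add.commute)
  also have "\<dots> = drop (k - 1) (u_word k) @ r"
    using at0 len by simp
  finally have "drop (s + (k - 1)) w = drop (k - 1) (u_word k) @ r" .
  then have "drop s w \<in> ?P \<longleftrightarrow> drop (s + (k - 1)) w \<in> ?P"
    using at0 Pref_Sk_first_factor[of k "u_word k" r] len assms
      u_word_not_in_Sk u_word_short_prefix_in_Sk by simp
  moreover have "s + (k - 1) < length w"
    using occurrence_length[OF occ] len assms by simp
  ultimately show "forbidden k w (s + 0) \<longleftrightarrow> forbidden k w (s + (k - 1))"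
    by (simp add: forbidden_iff)
next
  fix s assume occ: "occurrence (v_word k) w s"
  have len: "length (v_word k) = k"
    using assms by (simp add: v_word_def)
  have "drop s w \<notin> Pref (lang_star (Sk k))"
    using occurrence_suffix[OF occ] Pref_Sk_first_factor[of k "v_word k"] len assms
      v_word_not_in_Sk v_word_short_prefix_not_in_Sk by simp
  moreover have "s < length w"
    using occurrence_length[OF occ] len assms by simp
  ultimately show "forbidden k w (s + 0)"
    by (simp add: forbidden_iff)
qed

end
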